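(* For $\sigma>0$ and $k\in\mathbb{N}$, \[ \|T_k-\mathcal K_G^\sigma T_k\|_\infty\le\sum_{\ell=1}^{\lfloor k/2\rfloor}\frac{(2\ell-1)!!}{(2\ell)!\,(4\ell-1)!!}(k^2\sigma)^{2\ell}. \]
   Context: $T_k(x)=\cos(k\arccos x)$ is the Chebyshev polynomial of the first kind (as a polynomial on $\mathbb{R}$). $\mathcal K_G^\sigma(f)(x)=\int_{\mathbb{R}}\frac1{\sqrt{2\pi}\sigma}\exp\!\left(-\frac{(x-y)^2}{2\sigma^2}\right)f(y)\,dy$. $\|g\|_\infty=\sup_{x\in[-1,1]}|g(x)|$. $(2\ell-1)!!=\prod_{i=1}^\ell(2i-1)$ is the double factorial. *)

theory Defs
  imports "HOL-Analysis.Analysis" "HOL-Computational_Algebra.Polynomial"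
begin

definition chebyshev_T :: "nat \<Rightarrow> real poly" where
  "chebyshev_T k = (THE p. \<forall>x\<in>{-1..1}. poly p x = cos (real k * arccos x))"

definition gauss_smooth :: "real \<Rightarrow> (real \<Rightarrow> real) \<Rightarrow> real \<Rightarrow> real" where
  "gauss_smooth \<sigma> f x =
     (LINT y|lborel. (1 / (sqrt (2 * pi) * \<sigma>)) * exp (- ((x - y)\<^sup>2) / (2 * \<sigma>\<^sup>2)) * f y)"

definition sup_norm_11 :: "(real \<Rightarrow> real) \<Rightarrow> real" where
  "sup_norm_11 g = (SUP x\<in>{-1..1}. \<bar>g x\<bar>)"

text \<open>Double factorial (2l-1)!! = prod_{i=1}^l (2i-1), indexed by l.\<close>
definition odd_dfact :: "nat \<Rightarrow> nat" where
  "odd_dfact l = (\<Prod>i=1..l. 2 * i - 1)"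

end

theory Submission
  imports Defs "HOL-Probability.Distributions"
begin

(*
  Taylor-expanding a polynomial p at x and integrating against the Gaussian kernel, the odd
  central moments vanish and the even ones give
    K_G^sigma p (x) = sum_i (sigma^2 / 2)^i / i! * p^(2i) (x),
  so T_k - K_G^sigma T_k is controlled by the even derivatives of T_k on [-1,1].
  Since T_(n+1)' = (n+1) U_n and U_n is a nonnegative combination of Chebyshev polynomials,
  every derivative of T_k is such a combination, hence |T_k^(m)| <= T_k^(m) (1) on [-1,1].
  Differentiating the Chebyshev equation (1 - x^2) T'' - x T' + k^2 T = 0 m times and
  evaluating at 1 gives (2m+1) T_k^(m+1) (1) = (k^2 - m^2) T_k^(m) (1), whence
  T_k^(m) (1) <= k^(2m) / (2m-1)!!. The coefficients match since (2l)! = 2^l l! (2l-1)!!.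
*)

(* A named constant rather than [:0, 1:], so that the method algebra treats X as an atom. *)
definition polyX :: "real poly" where
  "polyX = [:0, 1:]"

lemma poly_polyX [simp]: "poly polyX x = x"
  and pderiv_polyX [simp]: "pderiv polyX = 1"
  and degree_polyX [simp]: "degree polyX = 1"
  by (simp_all add: polyX_def pderiv_pCons)

fun chebT :: "nat \<Rightarrow> real poly" where
  "chebT 0 = 1"
| "chebT (Suc 0) = polyX"
| "chebT (Suc (Suc n)) = 2 * polyX * chebT (Suc n) - chebT n"

fun chebU :: "nat \<Rightarrow> real poly" where
  "chebU 0 = 1"
| "chebU (Suc 0) = 2 * polyX"
| "chebU (Suc (Suc n)) = 2 * polyX * chebU (Suc n) - chebU n"

declare chebT.simps(3) [simp del] chebU.simps(3) [simp del]

lemma chebT_Suc_Suc_eq_chebU: "chebT (Suc (Suc n)) = polyX * chebU (Suc n) - chebU n"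
proof (induction n rule: chebT.induct)
  case (3 n)
  then show ?case
    using chebT.simps(3) [of "Suc (Suc n)"] chebU.simps(3) [of "Suc (Suc n)"]
      chebU.simps(3) [of "Suc n"] chebU.simps(3) [of n]
    by algebra
qed (simp_all add: chebT.simps chebU.simps algebra_simps)

lemma chebU_Suc_Suc_eq: "chebU (Suc (Suc n)) = chebU n + 2 * chebT (Suc (Suc n))"
proof (induction n rule: chebT.induct)
  case (3 n)
  then show ?case
    using chebT.simps(3) [of "Suc (Suc n)"] chebT.simps(3) [of "Suc n"]
      chebU.simps(3) [of "Suc (Suc n)"] chebU.simps(3) [of "Suc n"] chebU.simps(3) [of n]
      chebT_Suc_Suc_eq_chebU [of n]
    by algebra
qed (simp_all add: chebT.simps chebU.simps algebra_simps)

lemma one_minus_X2_chebU: "(1 - polyX * polyX) * chebU n = chebT n - polyX * chebT (Suc n)"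
proof (induction n rule: chebT.induct)
  case (3 n)
  then show ?case
    using chebT.simps(3) [of "Suc n"] chebT.simps(3) [of n] chebU.simps(3) [of n]
    by algebra
qed (simp_all add: chebT.simps chebU.simps algebra_simps)

lemma pderiv_chebT_Suc: "pderiv (chebT (Suc n)) = of_nat (Suc n) * chebU n"
proof (induction n rule: chebT.induct)
  case (3 n)
  have "pderiv (chebT (Suc (Suc (Suc n)))) =
      2 * chebT (Suc (Suc n)) + 2 * polyX * pderiv (chebT (Suc (Suc n))) - pderiv (chebT (Suc n))"
    by (simp add: chebT.simps(3) [of "Suc n"] pderiv_diff pderiv_mult algebra_simps)
  then show ?case
    using 3 chebU.simps(3) [of n] chebT_Suc_Suc_eq_chebU [of n] by (simp add: algebra_simps) algebra
qed (simp_all add: chebT.simps chebU.simps pderiv_mult pderiv_diff algebra_simps)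

lemma chebT_differential_eq:
  "(1 - polyX * polyX) * pderiv (pderiv (chebT n)) - polyX * pderiv (chebT n)
     + of_nat (n * n) * chebT n = 0"
proof (induction n rule: chebT.induct)
  case (3 n)
  have D1: "pderiv (chebT (Suc (Suc n))) =
      2 * chebT (Suc n) + 2 * polyX * pderiv (chebT (Suc n)) - pderiv (chebT n)"
    by (simp add: chebT.simps(3) pderiv_diff pderiv_mult)
  have D2: "pderiv (pderiv (chebT (Suc (Suc n)))) =
      4 * pderiv (chebT (Suc n)) + 2 * polyX * pderiv (pderiv (chebT (Suc n)))
      - pderiv (pderiv (chebT n))"
    by (simp add: D1 pderiv_diff pderiv_add pderiv_mult)
  have "(1 - polyX * polyX) * pderiv (chebT (Suc n)) = of_nat (Suc n) * (chebT n - polyX * chebT (Suc n))"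
    using pderiv_chebT_Suc [of n] one_minus_X2_chebU [of n] by (metis mult.left_commute)
  moreover have "(of_nat (Suc (Suc n) * Suc (Suc n)) :: real poly) = (of_nat n + 2) * (of_nat n + 2)"
    "(of_nat (Suc n * Suc n) :: real poly) = (of_nat n + 1) * (of_nat n + 1)"
    "(of_nat (Suc n) :: real poly) = of_nat n + 1"
    "(of_nat (n * n) :: real poly) = of_nat n * of_nat n"
    by (simp_all add: algebra_simps)
  ultimately show ?case
    using 3 chebT.simps(3) [of n] D1 D2 by algebra
qed (simp_all add: chebT.simps)

lemma chebT_higher_pderiv_differential_eq:
  "(1 - polyX * polyX) * (pderiv ^^ Suc (Suc m)) (chebT n)
     - of_nat (2 * m + 1) * polyX * (pderiv ^^ Suc m) (chebT n)
     + (of_nat (n * n) - of_nat (m * m)) * (pderiv ^^ m) (chebT n) = 0"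
proof (induction m)
  case 0
  then show ?case using chebT_differential_eq [of n] by (simp add: numeral_2_eq_2)
next
  case (Suc m)
  define q0 q1 q2 q3 where "q0 = (pderiv ^^ m) (chebT n)" and "q1 = pderiv q0"
    and "q2 = pderiv q1" and "q3 = pderiv q2"
  have "pderiv ((1 - polyX * polyX) * q2 - of_nat (2 * m + 1) * polyX * q1
      + (of_nat (n * n) - of_nat (m * m)) * q0) = 0"
    using Suc by (simp add: q0_def q1_def q2_def)
  then have "(1 - polyX * polyX) * q3 - of_nat (2 * m + 3) * polyX * q2
      + (of_nat (n * n) - of_nat (m * m + 2 * m + 1)) * q1 = 0"
    by (simp add: pderiv_add pderiv_diff pderiv_mult q1_def [symmetric] q2_def [symmetric]
        q3_def [symmetric] algebra_simps)
  then show ?case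
    by (simp add: q0_def q1_def q2_def q3_def algebra_simps)
qed

lemma poly_higher_pderiv_chebT_one_rec:
  "real (2 * m + 1) * poly ((pderiv ^^ Suc m) (chebT n)) 1
     = (real (n * n) - real (m * m)) * poly ((pderiv ^^ m) (chebT n)) 1"
  using arg_cong [OF chebT_higher_pderiv_differential_eq [of m n], of "\<lambda>p. poly p 1"]
  by (simp add: algebra_simps)

lemma poly_chebT_cos: "poly (chebT n) (cos t) = cos (real n * t)"
proof (induction n rule: chebT.induct)
  case (3 n)
  have "cos (real (Suc (Suc n)) * t) + cos (real n * t) = 2 * cos t * cos (real (Suc n) * t)"
    using cos_add [of "real (Suc n) * t" t] cos_diff [of "real (Suc n) * t" t]
    by (simp add: algebra_simps)
  then show ?case
    using 3 by (simp add: chebT.simps(3))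
qed simp_all

lemma poly_chebT_one: "poly (chebT n) 1 = 1"
  using poly_chebT_cos [of n 0] by simp

lemma abs_poly_chebT_le_one:
  assumes "x \<in> {-1..1}"
  shows "\<bar>poly (chebT n) x\<bar> \<le> 1"
  using assms poly_chebT_cos [of n "arccos x"] by simp

lemma chebyshev_T_eq_chebT: "chebyshev_T n = chebT n"
  unfolding chebyshev_T_def
proof (rule the_equality)
  show "\<forall>x\<in>{-1..1}. poly (chebT n) x = cos (real n * arccos x)"
    by (metis atLeastAtMost_iff poly_chebT_cos cos_arccos)
next
  fix p
  assume "\<forall>x\<in>{-1..1}. poly p x = cos (real n * arccos x)"
  then have "{-1..1::real} \<subseteq> {x. poly (p - chebT n) x = 0}"
    by (auto simp: poly_chebT_cos [symmetric])
  moreover have "infinite {-1..1::real}"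
    by simp
  ultimately have "infinite {x. poly (p - chebT n) x = 0}"
    by (rule infinite_super)
  then have "p - chebT n = 0"
    using poly_roots_finite by blast
  then show "p = chebT n"
    by simp
qed

lemma degree_chebT: "degree (chebT n) \<le> n"
proof (induction n rule: chebT.induct)
  case (3 n)
  have "degree (2 * polyX * chebT (Suc n)) \<le> Suc (Suc n)"
    using degree_mult_le [of "2 * polyX" "chebT (Suc n)"] degree_mult_le [of 2 polyX] 3(1)
    by simp
  then show ?case
    using 3(2) by (simp add: degree_diff_le chebT.simps(3))
qed simp_all

inductive nonneg_chebT_comb :: "real poly \<Rightarrow> bool" where
  zero: "nonneg_chebT_comb 0"
| add_chebT: "nonneg_chebT_comb p \<Longrightarrow> c \<ge> 0
    \<Longrightarrow> nonneg_chebT_comb (p + smult c (chebT j))"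

lemma nonneg_chebT_comb_chebT: "nonneg_chebT_comb (chebT j)"
  using nonneg_chebT_comb.add_chebT [OF nonneg_chebT_comb.zero, of 1 j] by simp

lemma nonneg_chebT_comb_add:
  assumes "nonneg_chebT_comb p" "nonneg_chebT_comb q"
  shows "nonneg_chebT_comb (p + q)"
  using assms(2)
proof induction
  case (add_chebT q c j)
  then show ?case
    using nonneg_chebT_comb.add_chebT [of "p + q" c j] by (simp add: add.assoc)
qed (simp add: assms(1))

lemma nonneg_chebT_comb_smult:
  assumes "nonneg_chebT_comb p" "c \<ge> 0"
  shows "nonneg_chebT_comb (smult c p)"
  using assms(1)
proof induction
  case (add_chebT p d j)
  then show ?case
    using assms(2) nonneg_chebT_comb.add_chebT [of "smult c p" "c * d" j]
    by (simp add: smult_add_right)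
qed (simp add: nonneg_chebT_comb.zero)

lemma nonneg_chebT_comb_double: "nonneg_chebT_comb p \<Longrightarrow> nonneg_chebT_comb (2 * p)"
  unfolding mult_2 by (rule nonneg_chebT_comb_add)

lemma nonneg_chebT_comb_chebU: "nonneg_chebT_comb (chebU n)"
proof (induction n rule: chebT.induct)
  case 1
  show ?case
    using nonneg_chebT_comb_chebT [of 0] by simp
next
  case 2
  show ?case
    using nonneg_chebT_comb_double [OF nonneg_chebT_comb_chebT [of 1]] by simp
next
  case (3 n)
  have "nonneg_chebT_comb (chebU n + 2 * chebT (Suc (Suc n)))"
    by (intro nonneg_chebT_comb_add nonneg_chebT_comb_double nonneg_chebT_comb_chebT 3)
  then show ?case
    by (simp only: chebU_Suc_Suc_eq)
qed

lemma nonneg_chebT_comb_pderiv_chebT: "nonneg_chebT_comb (pderiv (chebT n))"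
proof (cases n)
  case (Suc m)
  then show ?thesis
    using nonneg_chebT_comb_smult [OF nonneg_chebT_comb_chebU, of "real n" m]
    by (simp add: pderiv_chebT_Suc of_nat_poly)
qed (simp add: nonneg_chebT_comb.zero)

lemma nonneg_chebT_comb_pderiv:
  "nonneg_chebT_comb p \<Longrightarrow> nonneg_chebT_comb (pderiv p)"
  by (induction rule: nonneg_chebT_comb.induct)
    (simp_all add: nonneg_chebT_comb.zero pderiv_add pderiv_smult nonneg_chebT_comb_add
      nonneg_chebT_comb_smult nonneg_chebT_comb_pderiv_chebT)

lemma nonneg_chebT_comb_higher_pderiv_chebT: "nonneg_chebT_comb ((pderiv ^^ m) (chebT n))"
  by (induction m) (simp_all add: nonneg_chebT_comb_chebT nonneg_chebT_comb_pderiv)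

lemma nonneg_chebT_comb_abs_poly_le:
  assumes "nonneg_chebT_comb p" "x \<in> {-1..1}"
  shows "\<bar>poly p x\<bar> \<le> poly p 1"
  using assms(1)
proof induction
  case (add_chebT p c j)
  have "\<bar>poly p x + c * poly (chebT j) x\<bar>
      \<le> \<bar>poly p x\<bar> + c * \<bar>poly (chebT j) x\<bar>"
    using add_chebT.hyps(2) abs_triangle_ineq [of "poly p x" "c * poly (chebT j) x"]
    by (simp add: abs_mult)
  also have "\<dots> \<le> poly p 1 + c * 1"
    using add_chebT abs_poly_chebT_le_one [OF assms(2)] by (intro add_mono mult_left_mono) auto
  finally show ?case
    by (simp add: poly_chebT_one)
qed simp

lemma odd_dfact_Suc: "odd_dfact (Suc m) = odd_dfact m * (2 * m + 1)"
  by (simp add: odd_dfact_def)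

lemma odd_dfact_pos: "odd_dfact m > 0"
  by (simp add: odd_dfact_def)

lemma poly_higher_pderiv_chebT_one_le:
  "poly ((pderiv ^^ m) (chebT n)) 1 \<le> real n ^ (2 * m) / real (odd_dfact m)"
proof (induction m)
  case 0
  then show ?case by (simp add: poly_chebT_one odd_dfact_def)
next
  case (Suc m)
  have "0 \<le> poly ((pderiv ^^ m) (chebT n)) 1"
    using nonneg_chebT_comb_abs_poly_le [OF nonneg_chebT_comb_higher_pderiv_chebT, of 1 m n]
    by simp
  then have "real (2 * m + 1) * poly ((pderiv ^^ Suc m) (chebT n)) 1
      \<le> real (n * n) * poly ((pderiv ^^ m) (chebT n)) 1"
    unfolding poly_higher_pderiv_chebT_one_rec by (intro mult_right_mono) auto
  then have "poly ((pderiv ^^ Suc m) (chebT n)) 1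
      \<le> real (n * n) / real (2 * m + 1) * poly ((pderiv ^^ m) (chebT n)) 1"
    by (simp add: field_simps)
  also have "\<dots> \<le> real (n * n) / real (2 * m + 1) * (real n ^ (2 * m) / real (odd_dfact m))"
    using Suc by (intro mult_left_mono) auto
  also have "\<dots> = real n ^ (2 * Suc m) / real (odd_dfact (Suc m))"
    by (simp add: odd_dfact_Suc power2_eq_square algebra_simps)
  finally show ?case .
qed

lemma abs_poly_higher_pderiv_chebT_le:
  assumes "x \<in> {-1..1}"
  shows "\<bar>poly ((pderiv ^^ m) (chebT n)) x\<bar> \<le> real n ^ (2 * m) / real (odd_dfact m)"
  using nonneg_chebT_comb_abs_poly_le [OF nonneg_chebT_comb_higher_pderiv_chebT [of m n] assms]
    poly_higher_pderiv_chebT_one_le [of m n]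
  by linarith

lemma higher_pderiv_eq_0: "degree p < m \<Longrightarrow> (pderiv ^^ m) p = 0"
  by (rule poly_eqI) (simp add: coeff_higher_pderiv coeff_eq_0)

lemma poly_taylor_expansion:
  fixes p :: "real poly" and x y :: real
  assumes "degree p \<le> n"
  shows "poly p y = (\<Sum>j\<le>n. poly ((pderiv ^^ j) p) x / fact j * (y - x) ^ j)"
proof -
  define D where "D = (\<lambda>j h. poly ((pderiv ^^ j) p) (x + h))"
  have "DERIV (D j) h :> D (Suc j) h" for j h
    unfolding D_def by (auto intro!: derivative_eq_intros)
  then obtain t where
    "D 0 (y - x) = (\<Sum>j<Suc n. D j 0 / fact j * (y - x) ^ j)
      + D (Suc n) t / fact (Suc n) * (y - x) ^ Suc n"
    using Maclaurin_all_le [where diff = D and f = "D 0" and n = "Suc n" and x = "y - x"] by blast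
  then show ?thesis
    using higher_pderiv_eq_0 [of p "Suc n"] assms by (simp add: D_def lessThan_Suc_atMost)
qed

lemma gauss_smooth_eq_normal_density_integral:
  assumes "\<sigma> > 0"
  shows "gauss_smooth \<sigma> f x = (LINT y|lborel. normal_density x \<sigma> y * f y)"
proof -
  have "sqrt (2 * pi * \<sigma>\<^sup>2) = sqrt (2 * pi) * \<sigma>"
    using assms by (simp add: real_sqrt_mult)
  then show ?thesis
    unfolding gauss_smooth_def normal_density_def by (simp add: power2_commute)
qed

lemma has_bochner_integral_normal_centered_moment:
  assumes "\<sigma> > 0"
  shows "has_bochner_integral lborel (\<lambda>y. normal_density x \<sigma> y * (y - x) ^ j)
     (if even j then fact j * (\<sigma>\<^sup>2 / 2) ^ (j div 2) / fact (j div 2) else 0)"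
proof (cases "even j")
  case True
  then obtain i where "j = 2 * i" by blast
  then show ?thesis
    using normal_moment_even [where \<mu> = x and \<sigma> = \<sigma> and k = i] assms
    by (simp add: power_divide field_simps)
next
  case False
  then obtain i where "j = 2 * i + 1" using oddE by blast
  then show ?thesis
    using normal_moment_odd [where \<mu> = x and \<sigma> = \<sigma> and k = i] assms by simp
qed

lemma gauss_smooth_poly:
  fixes p :: "real poly"
  assumes "\<sigma> > 0" "degree p \<le> 2 * n + 1"
  shows "gauss_smooth \<sigma> (poly p) x
    = (\<Sum>i\<le>n. (\<sigma>\<^sup>2 / 2) ^ i / fact i * poly ((pderiv ^^ (2 * i)) p) x)"
proof -
  define a where "a j = poly ((pderiv ^^ j) p) x / fact j" for j
  define M where
    "M j = (if even j then fact j * (\<sigma>\<^sup>2 / 2) ^ (j div 2) / fact (j div 2) else 0 :: real)"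
    for j
  have "has_bochner_integral lborel
      (\<lambda>y. \<Sum>j\<le>2 * n + 1. a j * (normal_density x \<sigma> y * (y - x) ^ j))
      (\<Sum>j\<le>2 * n + 1. a j * M j)"
    unfolding M_def
    by (intro has_bochner_integral_sum has_bochner_integral_mult_right
        has_bochner_integral_normal_centered_moment assms(1))
  moreover have "(\<Sum>j\<le>2 * n + 1. a j * (normal_density x \<sigma> y * (y - x) ^ j))
      = normal_density x \<sigma> y * poly p y" for y
    unfolding poly_taylor_expansion [OF assms(2), of y x] a_def
    by (simp add: sum_distrib_left algebra_simps)
  ultimately have "gauss_smooth \<sigma> (poly p) x = (\<Sum>j\<le>Suc (2 * n). a j * M j)"
    unfolding gauss_smooth_eq_normal_density_integral [OF assms(1)]
    by (simp add: has_bochner_integral_integral_eq)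
  also have "\<dots> = (\<Sum>i\<le>n. (\<sigma>\<^sup>2 / 2) ^ i / fact i * poly ((pderiv ^^ (2 * i)) p) x)"
    unfolding sum.in_pairs_0 by (simp add: a_def M_def ac_simps)
  finally show ?thesis .
qed

lemma fact_double: "(fact (2 * m) :: real) = 2 ^ m * fact m * real (odd_dfact m)"
proof (induction m)
  case (Suc m)
  have "(fact (2 * Suc m) :: real) = (2 * real m + 2) * (2 * real m + 1) * fact (2 * m)"
    by (simp add: algebra_simps)
  also have "\<dots> = 2 ^ Suc m * fact (Suc m) * real (odd_dfact (Suc m))"
    unfolding Suc.IH by (simp add: odd_dfact_Suc algebra_simps)
  finally show ?case .
qed (simp add: odd_dfact_def)

lemma gauss_smooth_chebT:
  assumes "\<sigma> > 0"
  shows "gauss_smooth \<sigma> (poly (chebT k)) x = poly (chebT k) x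
    + (\<Sum>l=1..k div 2. (\<sigma>\<^sup>2 / 2) ^ l / fact l * poly ((pderiv ^^ (2 * l)) (chebT k)) x)"
proof -
  have "degree (chebT k) \<le> 2 * (k div 2) + 1"
    using degree_chebT [of k] by linarith
  then show ?thesis
    using gauss_smooth_poly [OF assms] by (simp add: sum.atMost_shift sum.atLeast1_atMost_eq)
qed

lemma abs_chebT_minus_gauss_smooth_le:
  assumes "\<sigma> > 0" "x \<in> {-1..1}"
  shows "\<bar>poly (chebT k) x - gauss_smooth \<sigma> (poly (chebT k)) x\<bar>
    \<le> (\<Sum>l=1..k div 2. (\<sigma>\<^sup>2 / 2) ^ l / fact l
          * (real k ^ (2 * (2 * l)) / real (odd_dfact (2 * l))))"
proof -
  have "\<bar>poly (chebT k) x - gauss_smooth \<sigma> (poly (chebT k)) x\<bar>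
      \<le> (\<Sum>l=1..k div 2. (\<sigma>\<^sup>2 / 2) ^ l / fact l
          * \<bar>poly ((pderiv ^^ (2 * l)) (chebT k)) x\<bar>)"
    unfolding gauss_smooth_chebT [OF assms(1)]
    using sum_abs [of "\<lambda>l. (\<sigma>\<^sup>2 / 2) ^ l / fact l * poly ((pderiv ^^ (2 * l)) (chebT k)) x"]
    by (simp add: abs_mult)
  also have "\<dots> \<le> (\<Sum>l=1..k div 2. (\<sigma>\<^sup>2 / 2) ^ l / fact l
      * (real k ^ (2 * (2 * l)) / real (odd_dfact (2 * l))))"
    by (intro sum_mono mult_left_mono abs_poly_higher_pderiv_chebT_le assms(2)) simp
  finally show ?thesis .
qed

theorem lemma8:
  fixes \<sigma> :: real and k :: nat
  assumes "\<sigma> > 0"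
  shows "sup_norm_11 (\<lambda>x. poly (chebyshev_T k) x - gauss_smooth \<sigma> (poly (chebyshev_T k)) x)
    \<le> (\<Sum>l=1..k div 2. real (odd_dfact l) / (fact (2 * l) * real (odd_dfact (2 * l)))
          * (real k ^ 2 * \<sigma>) ^ (2 * l))"
proof -
  have coeff: "(\<sigma>\<^sup>2 / 2) ^ l / fact l * (real k ^ (2 * (2 * l)) / real (odd_dfact (2 * l)))
      = real (odd_dfact l) / (fact (2 * l) * real (odd_dfact (2 * l))) * (real k ^ 2 * \<sigma>) ^ (2 * l)"
    for l
    using odd_dfact_pos [of l] unfolding fact_double
    by (simp add: power_mult_distrib power_divide power_mult [symmetric] field_simps)
  show ?thesis
    unfolding sup_norm_11_def chebyshev_T_eq_chebT
    using abs_chebT_minus_gauss_smooth_le [OF assms, of _ k, unfolded coeff]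
    by (intro cSUP_least) auto
qed

end
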